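(* For every integer $k \geq 1$, let $\mathcal{P}(k)$ denote the greatest common divisor of all the sums $\sum_{i=1}^{k} P_{n+i}$, $n \geq 0$. Then $$\mathcal{P}(k) = \begin{cases} 2P_{k/2}, & \text{if } k \equiv 0 \pmod 4;\\ Q_{k/2}, & \text{if } k \equiv 2 \pmod 4;\\ 1, & \text{if } k \equiv 1,3 \pmod 4.\end{cases}$$
   Context: The Pell sequence $(P_n)_{n\ge0}$ is defined by $P_0=0$, $P_1=1$, $P_n = 2P_{n-1}+P_{n-2}$. The associated Pell sequence $(Q_n)_{n\ge0}$ is defined by $Q_0=1$, $Q_1=1$, $Q_n=2Q_{n-1}+Q_{n-2}$. *)

theory Defs
  imports Main
begin

fun pell :: "nat \<Rightarrow> nat" where
  "pell 0 = 0"
| "pell (Suc 0) = 1"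
| "pell (Suc (Suc n)) = 2 * pell (Suc n) + pell n"

fun pellQ :: "nat \<Rightarrow> nat" where
  "pellQ 0 = 1"
| "pellQ (Suc 0) = 1"
| "pellQ (Suc (Suc n)) = 2 * pellQ (Suc n) + pellQ n"

definition pellGcd :: "nat \<Rightarrow> nat" where
  "pellGcd k = Gcd {(\<Sum>i=1..k. pell (n + i)) | n. True}"

end

(* Since Q(n+1) = Q n + 2 P n, twice a sum of consecutive Pell numbers telescopes:
   2 (P(n+1) + ... + P(n+k)) = Q(n+k+1) - Q(n+1).
   For k = 2h the addition formulas turn this sum into 2 P h P(n+h+1) (h even) or
   Q h Q(n+h+1) (h odd); consecutive P's, resp. Q's, are coprime, so the gcd over n is
   the constant factor.
   For odd k, comparing consecutive sums gives P(n+k) = P n modulo the gcd d for n >= 1,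
   hence P(k+1) = 1, P(k+2) = 2 and P k = 0 mod d, and Cassini's identity
   P(k+2) P k - P(k+1)^2 = 1 yields d | 2; finally d is odd because P(k+1) is even. *)

theory Submission
  imports Defs "HOL-Number_Theory.Cong"
begin

lemma pell_Suc_pellQ_Suc:
  "pell (Suc n) = pell n + pellQ n \<and> pellQ (Suc n) = pellQ n + 2 * pell n"
  by (induction n) simp_all

lemmas pell_Suc = pell_Suc_pellQ_Suc[THEN conjunct1]
   and pellQ_Suc = pell_Suc_pellQ_Suc[THEN conjunct2]

lemma pell_add_pellQ_add:
  "pell (a + b) = pell a * pellQ b + pellQ a * pell b \<and>
   pellQ (a + b) = pellQ a * pellQ b + 2 * pell a * pell b"
  by (induction b) (simp_all add: pell_Suc pellQ_Suc algebra_simps)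

lemmas pell_add = pell_add_pellQ_add[THEN conjunct1]
   and pellQ_add = pell_add_pellQ_add[THEN conjunct2]

lemma pellQ_square_minus_pell_square:
  "int (pellQ n) ^ 2 - 2 * int (pell n) ^ 2 = (-1) ^ n"
proof (induction n)
  case (Suc n)
  have "int (pellQ (Suc n)) ^ 2 - 2 * int (pell (Suc n)) ^ 2
          = - (int (pellQ n) ^ 2 - 2 * int (pell n) ^ 2)"
    by (simp add: pell_Suc pellQ_Suc power2_eq_square algebra_simps)
  with Suc show ?case by simp
qed simp

lemma pellQ_subtraction_formula:
  "int (pellQ (j + h)) * int (pellQ h) - 2 * int (pell (j + h)) * int (pell h)
     = (-1) ^ h * int (pellQ j)"
proof -
  have "int (pellQ (j + h)) * int (pellQ h) - 2 * int (pell (j + h)) * int (pell h)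
          = int (pellQ j) * (int (pellQ h) ^ 2 - 2 * int (pell h) ^ 2)"
    by (simp add: pell_add pellQ_add power2_eq_square algebra_simps)
  then show ?thesis
    by (simp add: pellQ_square_minus_pell_square)
qed

lemma pell_cassini:
  "int (pell (Suc (Suc n))) * int (pell n) - int (pell (Suc n)) ^ 2 = (-1) ^ Suc n"
proof (induction n)
  case (Suc n)
  have "int (pell (Suc (Suc (Suc n)))) * int (pell (Suc n)) - int (pell (Suc (Suc n))) ^ 2
          = - (int (pell (Suc (Suc n))) * int (pell n) - int (pell (Suc n)) ^ 2)"
    by (simp add: power2_eq_square algebra_simps)
  with Suc show ?case by simp
qed simp

lemma even_pell_iff: "even (pell n) \<longleftrightarrow> even n"
  by (induction n rule: pell.induct) simp_all

lemma sum_pell_telescope: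
  "2 * (\<Sum>i=1..m. pell (n + i)) + pellQ (n + 1) = pellQ (n + m + 1)"
  by (induction m) (simp_all add: pellQ_Suc)

lemma sum_pell_shift:
  "(\<Sum>i=1..k. pell (Suc n + i)) + pell (Suc n) = (\<Sum>i=1..k. pell (n + i)) + pell (n + k + 1)"
  by (induction k) simp_all

lemma sum_pell_even_length:
  "(\<Sum>i=1..2*h. pell (n + i)) =
     (if even h then 2 * pell h * pell (n + h + 1) else pellQ h * pellQ (n + h + 1))"
proof -
  define m where "m = n + h + 1"
  define S where "S = (\<Sum>i=1..2*h. pell (n + i))"
  have "2 * S + pellQ (n + 1) = pellQ (m + h)"
    using sum_pell_telescope[of n "2 * h"] by (simp add: S_def m_def mult_2 add.assoc)
  then have "int (2 * S + pellQ (n + 1)) = int (pellQ m * pellQ h + 2 * pell m * pell h)"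
    by (simp only: pellQ_add[of m h])
  then have "2 * int S = int (pellQ m) * int (pellQ h) + 2 * int (pell m) * int (pell h)
                         - int (pellQ (n + 1))"
    by simp
  also have "int (pellQ (n + 1))
               = (-1) ^ h * (int (pellQ m) * int (pellQ h) - 2 * int (pell m) * int (pell h))"
    using pellQ_subtraction_formula[of "n + 1" h] by (simp add: m_def add.commute add.left_commute)
  finally have "int S = int (if even h then 2 * pell h * pell m else pellQ h * pellQ m)"
    by (cases "even h") (simp_all add: algebra_simps)
  then have "S = (if even h then 2 * pell h * pell m else pellQ h * pellQ m)"
    by (simp only: of_nat_eq_iff)
  then show ?thesis
    by (simp add: S_def m_def)
qed

lemma coprime_Suc_if_recurrence:
  fixes a :: "nat \<Rightarrow> nat"
  assumes "\<And>n. a (Suc (Suc n)) = c * a (Suc n) + a n" and "coprime (a 1) (a 0)"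
  shows "coprime (a (Suc n)) (a n)"
proof (induction n)
  case (Suc n)
  have "gcd (a (Suc n)) (c * a (Suc n) + a n) = 1"
    using Suc by (simp add: gcd_add_mult coprime_iff_gcd_eq_1 gcd.commute)
  then show ?case
    by (simp add: assms(1) coprime_iff_gcd_eq_1 gcd.commute)
qed (use assms(2) in simp)

lemma coprime_pell_Suc: "coprime (pell (Suc n)) (pell n)"
  by (rule coprime_Suc_if_recurrence[where c = 2]) simp_all

lemma coprime_pellQ_Suc: "coprime (pellQ (Suc n)) (pellQ n)"
  by (rule coprime_Suc_if_recurrence[where c = 2]) simp_all

lemma Gcd_range_mult_coprime:
  fixes x :: "nat \<Rightarrow> nat"
  assumes "coprime (x (Suc c)) (x c)"
  shows "Gcd (range (\<lambda>n. t * x (n + c))) = t"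
proof (rule dvd_antisym)
  have "Gcd (range (\<lambda>n. t * x (n + c))) dvd gcd (t * x (Suc c)) (t * x c)"
    by (metis (no_types, lifting) Gcd_dvd add_0 gcd_greatest plus_1_eq_Suc rangeI)
  also have "\<dots> = t"
    using assms by (simp add: gcd_mult_left)
  finally show "Gcd (range (\<lambda>n. t * x (n + c))) dvd t" .
  show "t dvd Gcd (range (\<lambda>n. t * x (n + c)))"
    by (auto intro: Gcd_greatest)
qed

lemma pellGcd_eq_Gcd_range: "pellGcd k = Gcd (range (\<lambda>n. \<Sum>i=1..k. pell (n + i)))"
  by (simp add: pellGcd_def full_SetCompr_eq)

lemma pellGcd_even:
  "pellGcd (2 * h) = (if even h then 2 * pell h else pellQ h)"
proof -
  let ?t = "if even h then 2 * pell h else pellQ h"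
  let ?x = "\<lambda>n. if even h then pell n else pellQ n"
  have "coprime (?x (Suc (h + 1))) (?x (h + 1))"
    using coprime_pell_Suc coprime_pellQ_Suc by (simp del: pell.simps(3) pellQ.simps(3))
  then have "Gcd (range (\<lambda>n. ?t * ?x (n + (h + 1)))) = ?t"
    by (rule Gcd_range_mult_coprime)
  moreover have "(\<lambda>n. \<Sum>i=1..2*h. pell (n + i)) = (\<lambda>n. ?t * ?x (n + (h + 1)))"
    using sum_pell_even_length[where h = h] by (simp add: fun_eq_iff add.assoc)
  ultimately show ?thesis
    by (metis pellGcd_eq_Gcd_range)
qed

lemma pellGcd_dvd_sum: "pellGcd k dvd (\<Sum>i=1..k. pell (n + i))"
  unfolding pellGcd_eq_Gcd_range by (rule Gcd_dvd) simp

lemma pell_periodic_mod_pellGcd: "[pell (Suc n + k) = pell (Suc n)] (mod pellGcd k)"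
proof -
  let ?S = "\<lambda>n. \<Sum>i=1..k. pell (n + i)"
  have "[?S n + pell (Suc n + k) = pell (Suc n + k)] (mod pellGcd k)"
    using pellGcd_dvd_sum[of k n] by (simp add: cong_add_rcancel_0_nat cong_0_iff)
  then have "[pell (Suc n + k) = ?S n + pell (Suc n + k)] (mod pellGcd k)"
    by (rule cong_sym)
  also have "?S n + pell (Suc n + k) = ?S (Suc n) + pell (Suc n)"
    using sum_pell_shift by simp
  also have "[?S (Suc n) + pell (Suc n) = pell (Suc n)] (mod pellGcd k)"
    using pellGcd_dvd_sum[of k "Suc n"] by (simp add: cong_add_rcancel_0_nat cong_0_iff)
  finally show ?thesis .
qed

lemma pellGcd_odd:
  assumes "odd k"
  shows "pellGcd k = 1"
proof -
  let ?d = "pellGcd k"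
  have P1: "[pell (k + 1) = 1] (mod ?d)"
    using pell_periodic_mod_pellGcd[of 0 k] by simp
  have P2: "[pell (k + 2) = 2] (mod ?d)"
    using pell_periodic_mod_pellGcd[of 1 k] by (simp add: numeral_2_eq_2)
  have "[2 * 1 + pell k = 2 * pell (k + 1) + pell k] (mod ?d)"
    using P1 by (intro cong_add cong_mult) (auto simp: cong_sym_eq)
  also have "2 * pell (k + 1) + pell k = pell (k + 2)"
    by (simp add: numeral_2_eq_2)
  also note P2
  finally have "[2 + pell k = 2 + 0] (mod ?d)"
    by simp
  then have P0: "[pell k = 0] (mod ?d)"
    by (simp only: cong_add_lcancel_nat)
  have "int (pell (k + 2)) * int (pell k) - int (pell (k + 1)) ^ 2 = 1"
    using pell_cassini[of k] assms by (simp add: numeral_2_eq_2)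
  then have "int (pell (k + 1) ^ 2 + 1) = int (pell (k + 2) * pell k)"
    unfolding of_nat_add of_nat_mult of_nat_power by (simp add: algebra_simps)
  then have cassini: "pell (k + 1) ^ 2 + 1 = pell (k + 2) * pell k"
    by (simp only: of_nat_eq_iff)
  have "[1 ^ 2 + 1 = pell (k + 1) ^ 2 + 1] (mod ?d)"
    using P1 by (intro cong_add cong_pow) (auto simp: cong_sym_eq)
  also note cassini
  also have "[pell (k + 2) * pell k = 2 * 0] (mod ?d)"
    using P2 P0 by (rule cong_mult)
  finally have "?d dvd 2"
    by (simp add: cong_0_iff numeral_2_eq_2)
  then have "?d \<le> 2"
    by (rule dvd_imp_le) simp
  moreover have "odd ?d"
  proof
    assume "even ?d"
    then have "[pell (k + 1) = 1] (mod 2)"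
      using P1 by (rule cong_dvd_modulus_nat[rotated])
    moreover have "even (pell (k + 1))"
      using assms by (simp add: even_pell_iff)
    ultimately show False
      by (simp add: cong_def)
  qed
  ultimately show ?thesis
    by presburger
qed

theorem theorem15:
  fixes k :: nat
  assumes "k \<ge> 1"
  shows "pellGcd k = (if k mod 4 = 0 then 2 * pell (k div 2)
                      else if k mod 4 = 2 then pellQ (k div 2)
                      else 1)"
proof (cases "even k")
  case True
  then obtain h where k: "k = 2 * h" by blast
  have "even h \<longleftrightarrow> k mod 4 = 0" and "odd h \<longleftrightarrow> k mod 4 = 2"
    using k by presburger+
  then show ?thesis
    using pellGcd_even[of h] k by auto
next
  case False
  then have "k mod 4 \<noteq> 0" and "k mod 4 \<noteq> 2"
    by presburger+
  then show ?thesis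
    using pellGcd_odd[OF False] by simp
qed

end
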